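(* Let $q\geq 3$ be an odd prime power, $m\geq 2$, and $\delta_2=(q-1)q^{m-1}-q^{\lfloor\frac{2m-1}{3}\rfloor}-q^{\lfloor\frac{m-1}{3}\rfloor}-1$. Then the $q$-cyclotomic coset $C_{\delta_2}^{(q,q^m-1)}$ has size $m$ if $3\nmid m$ and size $\frac{m}{3}$ if $3\mid m$.
   Context: $C_i^{(q,N)}=\{i,iq,iq^2,\ldots\}\bmod N$ denotes the $q$-cyclotomic coset of $i$ modulo $N$. *)

theory Defs
  imports "HOL-Computational_Algebra.Primes"
begin

definition cyclotomic_coset :: "nat \<Rightarrow> nat \<Rightarrow> nat \<Rightarrow> nat set" where
  "cyclotomic_coset q N i = {(i * q ^ j) mod N | j. True}"

end

theory Submission
  imports Defs "HOL-Number_Theory.Cong"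
begin

(*
  Modulo N = q^m - 1, \<delta>\<^sub>2 is the negative of x = q^(m-1) + q^a + q^b, where
  a = (2m-1) div 3 and b = (m-1) div 3, and negation maps the coset of x onto the coset
  of \<delta>\<^sub>2. For m \<ge> 3 the exponents m-1 > a > b are distinct, so x has base-q digits 0
  and 1 with support E = {m-1, a, b}. Multiplication by q^j modulo N rotates this support
  by j in Z/m, and for q \<ge> 3 the result is again below N, so the coset of x is in
  bijection with the orbit of E under rotations. Rotating a 3-element set by j adds 3j to
  its element sum modulo m, so two rotations of E agree only if 3j = 3j' (mod m): the
  orbit has m elements if 3 does not divide m, while for m = 3t the set
  E = {t-1, 2t-1, 3t-1} is fixed by rotation by t and the orbit has t elements.
  For m = 2, x = 2q + 1 and its coset is {2q+1, q+2}.
*)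

lemma cong_mult_cancel_gcd_nat:
  fixes k m a b :: nat
  assumes "0 < m" and "[k * a = k * b] (mod m)"
  shows "[a = b] (mod m div gcd k m)"
proof -
  define g where "g = gcd k m"
  have "0 < g" using assms(1) by (simp add: g_def)
  obtain k' m' where k: "k = g * k'" and m: "m = g * m'"
    unfolding g_def by (meson dvd_def gcd_dvd1 gcd_dvd2)
  have "g * (k' * a mod m') = g * (k' * b mod m')"
    using assms(2) by (simp add: cong_def k m mult.assoc mod_mult_mult1)
  then have "[k' * a = k' * b] (mod m')"
    using \<open>0 < g\<close> by (simp add: cong_def)
  moreover have "coprime k' m'"
    using div_gcd_coprime[of k m] assms(1) \<open>0 < g\<close> unfolding g_def[symmetric] by (simp add: k m)
  moreover have "m div gcd k m = m'"
    unfolding g_def[symmetric] using \<open>0 < g\<close> by (simp add: m)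
  ultimately show ?thesis by (simp add: cong_mult_lcancel_nat)
qed

lemma card_image_lessThan_cong:
  assumes "0 < m" and "0 < d" and "d dvd m" and f: "\<And>j j'. f j = f j' \<longleftrightarrow> [j = j'] (mod d)"
  shows "card (f ` {..<m}) = d"
proof -
  have "d \<le> m" using assms by (simp add: dvd_imp_le)
  have "f ` {..<m} = f ` {..<d}"
  proof
    show "f ` {..<m} \<subseteq> f ` {..<d}"
    proof
      fix y assume "y \<in> f ` {..<m}"
      then obtain j where "y = f j" by blast
      moreover have "f j = f (j mod d)" using f[of j "j mod d"] by (simp add: cong_def)
      ultimately show "y \<in> f ` {..<d}" using assms(2) by auto
    qed
    show "f ` {..<d} \<subseteq> f ` {..<m}" using \<open>d \<le> m\<close> by (intro image_mono) auto
  qed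
  moreover have "inj_on f {..<d}"
  proof (rule inj_onI)
    fix j j' assume "j \<in> {..<d}" "j' \<in> {..<d}" "f j = f j'"
    then show "j = j'" using f cong_less_modulus_unique_nat by (metis lessThan_iff)
  qed
  ultimately show ?thesis by (simp add: card_image)
qed

lemma geometric_sum_nat: "(q - 1) * (\<Sum>i<n. q^i) = q^n - (1::nat)"
proof (induction n)
  case 0
  then show ?case by simp
next
  case (Suc n)
  then show ?case
    by (cases q) (simp_all add: algebra_simps)
qed

lemma complement_add_three_powers:
  fixes q m a b :: nat
  assumes "3 \<le> q" and "0 < m" and "a \<le> m - 1" and "b < m - 1"
  shows "((q - 1) * q^(m - 1) - q^a - q^b - 1) + (q^(m - 1) + q^a + q^b) = q^m - 1"
proof -
  define P where "P = q^(m - 1)"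
  have "q^a \<le> P" "q^b < P"
    unfolding P_def using assms by simp_all
  moreover have "2 * P \<le> (q - 1) * P"
    using assms(1) by (intro mult_right_mono) simp_all
  moreover have "q^m = (q - 1) * P + P"
  proof -
    have "q^m = q * P" unfolding P_def using assms(2) by (cases m) simp_all
    then show ?thesis using assms(1) by (cases q) simp_all
  qed
  ultimately show ?thesis
    unfolding P_def[symmetric] by linarith
qed

lemma sum_powers_less:
  fixes q :: nat
  assumes "2 \<le> q" and "E \<subseteq> {..<n}"
  shows "(\<Sum>e\<in>E. q^e) < q^n"
proof -
  have "(\<Sum>e\<in>E. q^e) \<le> (\<Sum>i<n. q^i)"
    using assms(2) by (intro sum_mono2) auto
  also have "\<dots> \<le> (q - 1) * (\<Sum>i<n. q^i)"
    using assms(1) mult_le_mono1[of 1 "q - 1" "\<Sum>i<n. q^i"] by linarith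
  also have "\<dots> < q^n"
    unfolding geometric_sum_nat using assms(1) by simp
  finally show ?thesis .
qed

lemma sum_powers_less_pred:
  fixes q :: nat
  assumes "3 \<le> q" and "0 < n" and "E \<subseteq> {..<n}"
  shows "(\<Sum>e\<in>E. q^e) < q^n - 1"
proof -
  have "1 \<le> (\<Sum>i<n. q^i)"
    using assms(2) member_le_sum[of 0 "{..<n}" "\<lambda>i. q^i"] by simp
  moreover have "2 * (\<Sum>i<n. q^i) \<le> q^n - 1"
    using assms(1) geometric_sum_nat[of q n] mult_right_mono[of 2 "q - 1" "\<Sum>i<n. q^i"] by simp
  moreover have "(\<Sum>e\<in>E. q^e) \<le> (\<Sum>i<n. q^i)"
    using assms(3) by (intro sum_mono2) auto
  ultimately show ?thesis by linarith
qed

lemma inj_on_sum_powers: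
  fixes q :: nat
  assumes "2 \<le> q"
  shows "inj_on (\<lambda>E. \<Sum>e\<in>E. q^e) (Pow {..<n})"
proof (induction n)
  case 0
  then show ?case by simp
next
  case (Suc n)
  show ?case
  proof (rule inj_onI)
    fix A B assume A: "A \<in> Pow {..<Suc n}" and B: "B \<in> Pow {..<Suc n}"
      and sums_eq: "(\<Sum>e\<in>A. q^e) = (\<Sum>e\<in>B. q^e)"
    have below_iff: "(\<Sum>e\<in>C. q^e) < q^n \<longleftrightarrow> n \<notin> C" if "C \<subseteq> {..<Suc n}" for C
    proof
      assume "n \<notin> C"
      then have "C \<subseteq> {..<n}" using that by (auto simp: less_Suc_eq)
      then show "(\<Sum>e\<in>C. q^e) < q^n" by (rule sum_powers_less[OF assms])
    next
      assume "(\<Sum>e\<in>C. q^e) < q^n"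
      moreover have "finite C" using that finite_subset by blast
      ultimately show "n \<notin> C" using member_le_sum[of n C "\<lambda>e. q^e"] by auto
    qed
    have top_digit: "n \<in> A \<longleftrightarrow> n \<in> B"
      using below_iff[of A] below_iff[of B] A B sums_eq by simp
    have "(\<Sum>e\<in>A - {n}. q^e) = (\<Sum>e\<in>B - {n}. q^e)"
      using sums_eq top_digit by (simp add: sum_diff1_nat)
    moreover have "A - {n} \<in> Pow {..<n}" "B - {n} \<in> Pow {..<n}"
      using A B by (auto simp: less_Suc_eq)
    ultimately have "A - {n} = B - {n}"
      using Suc.IH by (simp add: inj_on_eq_iff)
    then show "A = B" using top_digit by blast
  qed
qed

lemma cong_power_mod_exponent:
  fixes q :: nat
  assumes "0 < q"
  shows "[q^n = q^(n mod m)] (mod q^m - 1)"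
proof -
  have "[(q^m - 1) + 1 = 0 + 1] (mod q^m - 1)"
    by (intro cong_add cong_refl) (simp add: cong_def)
  then have "[q^m = 1] (mod q^m - 1)"
    using assms by simp
  then have "[(q^m)^(n div m) * q^(n mod m) = 1^(n div m) * q^(n mod m)] (mod q^m - 1)"
    by (intro cong_mult cong_pow cong_refl)
  then show ?thesis by (simp flip: power_mult power_add)
qed

section \<open>Cyclic shifts of exponent sets\<close>

definition cyclic_shift :: "nat \<Rightarrow> nat \<Rightarrow> nat set \<Rightarrow> nat set" where
  "cyclic_shift m j E = (\<lambda>e. (e + j) mod m) ` E"

lemma cyclic_shift_subset: "0 < m \<Longrightarrow> cyclic_shift m j E \<subseteq> {..<m}"
  by (auto simp: cyclic_shift_def)

lemma cyclic_shift_0: "E \<subseteq> {..<m} \<Longrightarrow> cyclic_shift m 0 E = E"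
  by (force simp: cyclic_shift_def)

lemma cyclic_shift_mod: "cyclic_shift m (j mod m) E = cyclic_shift m j E"
  by (simp add: cyclic_shift_def mod_add_right_eq)

lemma cyclic_shift_cyclic_shift:
  "cyclic_shift m i (cyclic_shift m j E) = cyclic_shift m (j + i) E"
  by (simp add: cyclic_shift_def image_image mod_add_left_eq add.assoc)

lemma cyclic_shift_mod_period:
  assumes "E \<subseteq> {..<m}" and "cyclic_shift m d E = E"
  shows "cyclic_shift m j E = cyclic_shift m (j mod d) E"
proof -
  have multiple: "cyclic_shift m (d * n) E = E" for n
  proof (induction n)
    case 0
    show ?case using cyclic_shift_0[OF assms(1)] by simp
  next
    case (Suc n)
    have "cyclic_shift m (d * Suc n) E = cyclic_shift m d (cyclic_shift m (d * n) E)"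
      by (metis cyclic_shift_cyclic_shift mult_Suc_right add.commute)
    then show ?case using Suc.IH assms(2) by simp
  qed
  have "cyclic_shift m j E = cyclic_shift m (j mod d) (cyclic_shift m (d * (j div d)) E)"
    by (simp add: cyclic_shift_cyclic_shift)
  then show ?thesis by (simp only: multiple)
qed

lemma inj_on_add_mod: "inj_on (\<lambda>e. (e + j) mod m) {..<m::nat}"
proof (rule inj_onI)
  fix x y assume "x \<in> {..<m}" "y \<in> {..<m}" "(x + j) mod m = (y + j) mod m"
  then have "[x = y] (mod m)" "x < m" "y < m"
    by (simp_all flip: cong_def add: cong_add_rcancel_nat)
  then show "x = y" by (rule cong_less_modulus_unique_nat)
qed

lemma cong_sum_cyclic_shift:
  assumes "E \<subseteq> {..<m}"
  shows "[\<Sum>(cyclic_shift m j E) = \<Sum>E + card E * j] (mod m)"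
proof -
  have "finite E" using assms finite_subset by blast
  have "\<Sum>(cyclic_shift m j E) = (\<Sum>e\<in>E. (e + j) mod m)"
    unfolding cyclic_shift_def using inj_on_subset[OF inj_on_add_mod assms] by (simp add: sum.reindex)
  also have "[\<dots> = (\<Sum>e\<in>E. e + j)] (mod m)"
    by (rule cong_sum) (simp add: cong_def)
  also have "(\<Sum>e\<in>E. e + j) = \<Sum>E + card E * j"
    by (simp add: sum.distrib)
  finally show ?thesis .
qed

lemma cyclic_shift_eq_iff_cong:
  assumes "0 < m" and "E \<subseteq> {..<m}"
    and "cyclic_shift m (m div gcd (card E) m) E = E"
  shows "cyclic_shift m j E = cyclic_shift m j' E \<longleftrightarrow> [j = j'] (mod m div gcd (card E) m)"
proof
  assume shifts_eq: "cyclic_shift m j E = cyclic_shift m j' E"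
  have "[\<Sum>E + card E * j = \<Sum>(cyclic_shift m j E)] (mod m)"
    using cong_sum_cyclic_shift[OF assms(2)] by (rule cong_sym)
  also have "\<Sum>(cyclic_shift m j E) = \<Sum>(cyclic_shift m j' E)"
    using shifts_eq by simp
  also have "[\<dots> = \<Sum>E + card E * j'] (mod m)"
    by (rule cong_sum_cyclic_shift[OF assms(2)])
  finally show "[j = j'] (mod m div gcd (card E) m)"
    using assms(1) by (simp add: cong_add_lcancel_nat cong_mult_cancel_gcd_nat)
next
  assume "[j = j'] (mod m div gcd (card E) m)"
  then have "j mod (m div gcd (card E) m) = j' mod (m div gcd (card E) m)"
    by (simp add: cong_def)
  then show "cyclic_shift m j E = cyclic_shift m j' E"
    by (simp only: cyclic_shift_mod_period[OF assms(2,3), of j] cyclic_shift_mod_period[OF assms(2,3), of j'])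
qed

lemma card_cyclic_shift_orbit:
  assumes "0 < m" and "E \<subseteq> {..<m}"
    and "cyclic_shift m (m div gcd (card E) m) E = E"
  shows "card ((\<lambda>j. cyclic_shift m j E) ` {..<m}) = m div gcd (card E) m"
proof (rule card_image_lessThan_cong[OF assms(1)])
  show "0 < m div gcd (card E) m"
    using assms(1) by (simp add: div_greater_zero_iff)
  show "m div gcd (card E) m dvd m" by (metis dvd_triv_left dvd_div_mult_self gcd_dvd2)
  show "cyclic_shift m j E = cyclic_shift m j' E \<longleftrightarrow> [j = j'] (mod m div gcd (card E) m)" for j j'
    by (rule cyclic_shift_eq_iff_cong[OF assms])
qed

lemma cyclic_shift_thirds:
  assumes "0 < t"
  shows "cyclic_shift (3 * t) t {3 * t - 1, 2 * t - 1, t - 1} = {3 * t - 1, 2 * t - 1, t - 1}"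
proof -
  have "(3 * t - 1 + t) mod (3 * t) = t - 1"
    using assms mod_add_self2[of "t - 1" "3 * t"] by (simp add: algebra_simps)
  moreover have "(2 * t - 1 + t) mod (3 * t) = 3 * t - 1" "(t - 1 + t) mod (3 * t) = 2 * t - 1"
    using assms by simp_all
  ultimately show ?thesis by (auto simp: cyclic_shift_def)
qed

section \<open>Cyclotomic cosets modulo q^m - 1\<close>

lemma cyclotomic_coset_subset: "0 < N \<Longrightarrow> cyclotomic_coset q N i \<subseteq> {..<N}"
  by (auto simp: cyclotomic_coset_def)

lemma cyclotomic_coset_eq_image:
  fixes q :: nat
  assumes "0 < q" and "0 < m"
  shows "cyclotomic_coset q (q^m - 1) i = (\<lambda>j. i * q^j mod (q^m - 1)) ` {..<m}"
proof (intro equalityI subsetI)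
  fix y assume "y \<in> cyclotomic_coset q (q^m - 1) i"
  then obtain j where "y = i * q^j mod (q^m - 1)"
    unfolding cyclotomic_coset_def by blast
  also have "\<dots> = i * q^(j mod m) mod (q^m - 1)"
    using cong_mult[OF cong_refl cong_power_mod_exponent[OF assms(1)]] by (simp add: cong_def)
  finally show "y \<in> (\<lambda>j. i * q^j mod (q^m - 1)) ` {..<m}"
    using assms(2) by auto
qed (auto simp: cyclotomic_coset_def)

lemma cyclotomic_coset_complement:
  assumes "0 < N" and "[i + i' = 0] (mod N)"
  shows "cyclotomic_coset q N i' = (\<lambda>r. (N - r) mod N) ` cyclotomic_coset q N i"
proof -
  have "i' * q^j mod N = (N - i * q^j mod N) mod N" for j
  proof -
    have "[(i + i') * q^j = 0 * q^j] (mod N)"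
      using assms(2) by (intro cong_mult cong_refl)
    then have "[i' * q^j + i * q^j mod N = 0] (mod N)"
      by (simp add: cong_def mod_add_right_eq algebra_simps)
    moreover have "[N - i * q^j mod N + i * q^j mod N = 0] (mod N)"
      using assms(1) by (simp add: cong_def less_imp_le)
    ultimately have "[i' * q^j + i * q^j mod N = N - i * q^j mod N + i * q^j mod N] (mod N)"
      by (rule cong_trans[OF _ cong_sym])
    then have "[i' * q^j = N - i * q^j mod N] (mod N)"
      by (simp only: cong_add_rcancel_nat)
    then show ?thesis by (simp only: cong_def)
  qed
  then show ?thesis unfolding cyclotomic_coset_def by auto
qed

lemma card_cyclotomic_coset_complement:
  assumes "0 < N" and "[i + i' = 0] (mod N)"
  shows "card (cyclotomic_coset q N i') = card (cyclotomic_coset q N i)"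
proof -
  have finite: "finite (cyclotomic_coset q N k)" for k
    using cyclotomic_coset_subset[OF assms(1)] finite_subset by blast
  have "[i' + i = 0] (mod N)" using assms(2) by (simp add: add.commute)
  then show ?thesis
    using cyclotomic_coset_complement[OF assms] cyclotomic_coset_complement[OF assms(1)]
      card_image_le[OF finite] le_antisym by metis
qed

lemma sum_powers_mult_power_mod:
  fixes q :: nat
  assumes "3 \<le> q" and "0 < m" and "E \<subseteq> {..<m}"
  shows "(\<Sum>e\<in>E. q^e) * q^j mod (q^m - 1) = (\<Sum>e\<in>cyclic_shift m j E. q^e)"
proof -
  have "[(\<Sum>e\<in>E. q^e) * q^j = (\<Sum>e\<in>E. q^((e + j) mod m))] (mod q^m - 1)"
    unfolding sum_distrib_right power_add[symmetric]
    using assms(1) by (intro cong_sum cong_power_mod_exponent) simp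
  also have "(\<Sum>e\<in>E. q^((e + j) mod m)) = (\<Sum>e\<in>cyclic_shift m j E. q^e)"
    unfolding cyclic_shift_def using inj_on_subset[OF inj_on_add_mod assms(3)]
    by (simp add: sum.reindex)
  finally show ?thesis
    using sum_powers_less_pred[OF assms(1,2) cyclic_shift_subset[OF assms(2)]]
    by (simp add: cong_def)
qed

lemma card_cyclotomic_coset_sum_powers:
  fixes q :: nat
  assumes "3 \<le> q" and "0 < m" and "E \<subseteq> {..<m}"
  shows "card (cyclotomic_coset q (q^m - 1) (\<Sum>e\<in>E. q^e))
    = card ((\<lambda>j. cyclic_shift m j E) ` {..<m})"
proof -
  have "0 < q" using assms(1) by simp
  then have "cyclotomic_coset q (q^m - 1) (\<Sum>e\<in>E. q^e)
      = (\<lambda>F. \<Sum>e\<in>F. q^e) ` (\<lambda>j. cyclic_shift m j E) ` {..<m}"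
    unfolding cyclotomic_coset_eq_image[OF \<open>0 < q\<close> assms(2)] image_image
    by (intro image_cong refl sum_powers_mult_power_mod[OF assms])
  moreover have "inj_on (\<lambda>F. \<Sum>e\<in>F. q^e) ((\<lambda>j. cyclic_shift m j E) ` {..<m})"
    using assms(1,2) cyclic_shift_subset
    by (intro inj_on_subset[OF inj_on_sum_powers[of q m]]) auto
  ultimately show ?thesis by (simp add: card_image)
qed

lemma card_cyclotomic_coset_two_q_plus_one:
  fixes q :: nat
  assumes "3 \<le> q"
  shows "card (cyclotomic_coset q (q^2 - 1) (2 * q + 1)) = 2"
proof -
  have "3 * q \<le> q^2" using assms by (simp add: power2_eq_square)
  then have small: "2 * q + 1 < q^2 - 1" "q + 2 < q^2 - 1" using assms by linarith+
  have "(2 * q + 1) * q = 2 * q^2 + q"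
    by (simp add: power2_eq_square algebra_simps)
  also have "\<dots> = (q + 2) + 2 * (q^2 - 1)"
    using \<open>3 * q \<le> q^2\<close> assms by linarith
  finally have "(2 * q + 1) * q mod (q^2 - 1) = q + 2"
    using small(2) by (simp only: mod_mult_self1 mod_less)
  moreover have "{..<2::nat} = {0, 1}" by auto
  ultimately have "cyclotomic_coset q (q^2 - 1) (2 * q + 1) = {2 * q + 1, q + 2}"
    using assms small(1) cyclotomic_coset_eq_image[of q 2 "2 * q + 1"] by simp
  then show ?thesis using assms by simp
qed

lemma card_cyclotomic_coset_three_digits:
  fixes q m :: nat
  assumes "3 \<le> q" and "3 \<le> m"
  shows "card (cyclotomic_coset q (q^m - 1) (q^(m - 1) + q^((2 * m - 1) div 3) + q^((m - 1) div 3)))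
    = (if 3 dvd m then m div 3 else m)"
proof -
  define E where "E = {m - 1, (2 * m - 1) div 3, (m - 1) div 3}"
  have below: "(m - 1) div 3 < (2 * m - 1) div 3" "(2 * m - 1) div 3 < m - 1"
    using assms(2) by presburger+
  then have E_sub: "E \<subseteq> {..<m}" and card_E: "card E = 3"
    unfolding E_def by auto
  have sum_E: "(\<Sum>e\<in>E. q^e) = q^(m - 1) + q^((2 * m - 1) div 3) + q^((m - 1) div 3)"
    unfolding E_def using below by simp
  have "gcd 3 m = (if 3 dvd m then 3 else 1)"
    using prime_imp_coprime[of 3 m] by (auto simp: coprime_iff_gcd_eq_1 gcd_nat.absorb1)
  then have period: "m div gcd (card E) m = (if 3 dvd m then m div 3 else m)"
    using card_E by simp
  have shift_invariant: "cyclic_shift m (m div gcd (card E) m) E = E"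
  proof (cases "3 dvd m")
    case True
    then obtain t where "m = 3 * t" "0 < t" using assms(2) by auto
    moreover have "(2 * (3 * t) - 1) div 3 = 2 * t - 1" "(3 * t - 1) div 3 = t - 1"
      using \<open>0 < t\<close> by presburger+
    then have "E = {3 * t - 1, 2 * t - 1, t - 1}"
      unfolding E_def \<open>m = 3 * t\<close> by simp
    ultimately show ?thesis
      using period True cyclic_shift_thirds by simp
  next
    case False
    then show ?thesis
      using period cyclic_shift_mod[of m m E] cyclic_shift_0[OF E_sub] by simp
  qed
  have "0 < m" using assms(2) by simp
  have "card (cyclotomic_coset q (q^m - 1) (\<Sum>e\<in>E. q^e))
      = card ((\<lambda>j. cyclic_shift m j E) ` {..<m})"
    by (rule card_cyclotomic_coset_sum_powers[OF assms(1) \<open>0 < m\<close> E_sub])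
  also have "\<dots> = m div gcd (card E) m"
    by (rule card_cyclic_shift_orbit[OF \<open>0 < m\<close> E_sub shift_invariant])
  finally show ?thesis
    unfolding sum_E period .
qed

theorem lemma19:
  fixes q m p k :: nat
  assumes "prime p" and "k \<ge> 1" and "q = p ^ k"
    and "odd q" and "q \<ge> 3"
    and "m \<ge> 2"
  defines "\<delta>\<^sub>2 \<equiv> (q - 1) * q ^ (m - 1) - q ^ ((2 * m - 1) div 3) - q ^ ((m - 1) div 3) - 1"
  shows "card (cyclotomic_coset q (q ^ m - 1) \<delta>\<^sub>2) = (if 3 dvd m then m div 3 else m)"
proof -
  define x where "x = q^(m - 1) + q^((2 * m - 1) div 3) + q^((m - 1) div 3)"
  have "(2 * m - 1) div 3 \<le> m - 1" "(m - 1) div 3 < m - 1"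
    using assms(6) by presburger+
  then have "\<delta>\<^sub>2 + x = q^m - 1"
    unfolding \<delta>\<^sub>2_def x_def using assms(5,6) by (intro complement_add_three_powers) simp_all
  then have "[x + \<delta>\<^sub>2 = 0] (mod q^m - 1)"
    by (simp add: cong_def add.commute)
  with card_cyclotomic_coset_complement have "card (cyclotomic_coset q (q^m - 1) \<delta>\<^sub>2) = card (cyclotomic_coset q (q^m - 1) x)"
    using assms(5,6) one_less_power[of q m] by simp
  also have "\<dots> = (if 3 dvd m then m div 3 else m)"
  proof (cases "m = 2")
    case True
    then show ?thesis
      unfolding x_def using card_cyclotomic_coset_two_q_plus_one[OF assms(5)] by (simp add: mult_2)
  next
    case False
    then show ?thesis
      unfolding x_def using card_cyclotomic_coset_three_digits assms(5,6) by simp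
  qed
  finally show ?thesis .
qed

end
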